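(* Let $\mathbf L$ be an algebraic lattice with an equa-interior operator $\eta$, and let $x,z,a$ be coatoms of $\mathbf L$ with $x\wedge z\le a$ properly. Then $\eta(a)\le x\wedge z$, and consequently (1) $\tau(x\wedge z)=a$, (2) $\eta(x)\not\le a$, and (3) $\eta(x)\not\le z$.
   Context: An equa-interior operator on an algebraic lattice $\mathbf L$ is a map $\eta:L\to L$ such that for all $x,y,z\in L$: (I1) $\eta(x)\le x$; (I2) $x\ge y$ implies $\eta(x)\ge\eta(y)$; (I3) $\eta^2(x)=\eta(x)$; (I4) $\eta(1)=1$; (I5) if $\eta(x)=u$ for all $x\in X\subseteq L$ then $\eta(\bigvee X)=u$; (I6) $\eta(x)\vee(y\wedge z)=(\eta(x)\vee y)\wedge(\eta(x)\vee z)$; (I7) the image $\eta(L)$ is the complete join subsemilattice of $L$ generated by the elements of $\eta(L)$ that are compact in $\mathbf L$; (I8) there is a compact element $w\in L$ with $\eta(w)=w$ such that the interval $[w,1]$ is isomorphic to the congruence lattice of a join semilattice with $0$. Define $\tau(y)=\bigvee\{u\in L:\eta(u)=\eta(y)\}$. For coatoms, "$x\wedge z\le a$ properly" means $x\wedge z\le a$ while $x\not\le a$ and $z\not\le a$. *)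

theory Defs
  imports Main
begin

definition compact_el :: "'a::complete_lattice \<Rightarrow> bool" where
  "compact_el c \<longleftrightarrow> (\<forall>A. c \<le> Sup A \<longrightarrow> (\<exists>F. finite F \<and> F \<subseteq> A \<and> c \<le> Sup F))"

definition algebraic_lattice :: "'a::complete_lattice itself \<Rightarrow> bool" where
  "algebraic_lattice _ \<longleftrightarrow> (\<forall>x::'a. x = Sup {c. compact_el c \<and> c \<le> x})"

definition coatom :: "'a::complete_lattice \<Rightarrow> bool" where
  "coatom a \<longleftrightarrow> a \<noteq> top \<and> (\<forall>y. a \<le> y \<longrightarrow> y = a \<or> y = top)"

definition join_semilattice0 :: "'b set \<Rightarrow> ('b \<Rightarrow> 'b \<Rightarrow> 'b) \<Rightarrow> 'b \<Rightarrow> bool" where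
  "join_semilattice0 S j e \<longleftrightarrow>
     e \<in> S \<and> (\<forall>x\<in>S. \<forall>y\<in>S. j x y \<in> S) \<and>
     (\<forall>x\<in>S. \<forall>y\<in>S. \<forall>z\<in>S. j (j x y) z = j x (j y z)) \<and>
     (\<forall>x\<in>S. \<forall>y\<in>S. j x y = j y x) \<and>
     (\<forall>x\<in>S. j x x = x) \<and>
     (\<forall>x\<in>S. j e x = x)"

definition sl_congruences :: "'b set \<Rightarrow> ('b \<Rightarrow> 'b \<Rightarrow> 'b) \<Rightarrow> ('b \<times> 'b) set set" where
  "sl_congruences S j = {\<theta>. equiv S \<theta> \<and>
     (\<forall>a b c d. (a, b) \<in> \<theta> \<longrightarrow> (c, d) \<in> \<theta> \<longrightarrow> (j a c, j b d) \<in> \<theta>)}"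

definition equa_interior :: "('a::complete_lattice \<Rightarrow> 'a) \<Rightarrow> 'b itself \<Rightarrow> bool" where
  "equa_interior \<eta> _ \<longleftrightarrow>
     (\<forall>x. \<eta> x \<le> x) \<and>
     (\<forall>x y. y \<le> x \<longrightarrow> \<eta> y \<le> \<eta> x) \<and>
     (\<forall>x. \<eta> (\<eta> x) = \<eta> x) \<and>
     \<eta> top = top \<and>
     (\<forall>X u. X \<noteq> {} \<longrightarrow> (\<forall>x\<in>X. \<eta> x = u) \<longrightarrow> \<eta> (Sup X) = u) \<and>
     (\<forall>x y z. sup (\<eta> x) (inf y z) = inf (sup (\<eta> x) y) (sup (\<eta> x) z)) \<and>
     range \<eta> = {Sup A | A. A \<subseteq> range \<eta> \<inter> {c. compact_el c}} \<and>
     (\<exists>w. compact_el w \<and> \<eta> w = w \<and>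
        (\<exists>(S::'b set) j e f. join_semilattice0 S j e \<and>
           bij_betw f {y. w \<le> y} (sl_congruences S j) \<and>
           (\<forall>y1\<in>{y. w \<le> y}. \<forall>y2\<in>{y. w \<le> y}. y1 \<le> y2 \<longleftrightarrow> f y1 \<subseteq> f y2)))"

definition tau :: "('a::complete_lattice \<Rightarrow> 'a) \<Rightarrow> 'a \<Rightarrow> 'a" where
  "tau \<eta> y = Sup {u. \<eta> u = \<eta> y}"

end

theory Submission
  imports Defs
begin

text \<open>Since \<open>\<eta>(a) \<le> a\<close>, the element \<open>\<eta>(a) \<squnion> (x \<sqinter> z)\<close> lies below \<open>a\<close>. If \<open>\<eta>(a) \<not>\<le> x\<close>, then
  \<open>\<eta>(a) \<squnion> x = 1\<close> because \<open>x\<close> is a coatom, and distributivity (I6) turns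
  \<open>\<eta>(a) \<squnion> (x \<sqinter> z)\<close> into \<open>\<eta>(a) \<squnion> z \<ge> z\<close>, contradicting \<open>z \<not>\<le> a\<close>; symmetrically \<open>\<eta>(a) \<le> z\<close>.
  Hence \<open>\<eta>\<close> is constant on \<open>[\<eta>(a), a] \<ni> x \<sqinter> z\<close>. The join \<open>\<tau>(x \<sqinter> z)\<close> of the \<open>\<eta>\<close>-class of
  \<open>a\<close> still has interior \<open>\<eta>(a) \<noteq> 1\<close> by (I5), so it is the coatom \<open>a\<close>. Finally (I5) also shows
  that distinct coatoms have distinct interiors, as their join is \<open>1 = \<eta>(1)\<close>.
  Only (I1)--(I6) are used.\<close>

lemma coatom_sup_eq_top:
  assumes "coatom x" and "\<not> y \<le> x"
  shows "sup y x = top"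
proof -
  have "x \<le> sup y x" by simp
  moreover have "sup y x \<noteq> x" using assms(2) by (auto simp: sup.absorb_iff2)
  ultimately show ?thesis using assms(1) unfolding coatom_def by blast
qed

lemma distrib_element_le_coatom:
  fixes d :: "'a::complete_lattice"
  assumes distrib: "sup d (inf x z) = inf (sup d x) (sup d z)"
    and "d \<le> a" and "inf x z \<le> a" and "coatom x" and "\<not> z \<le> a"
  shows "d \<le> x"
proof (rule ccontr)
  assume "\<not> d \<le> x"
  then have "sup d x = top" using \<open>coatom x\<close> by (simp add: coatom_sup_eq_top sup_commute)
  then have "sup d (inf x z) = sup d z" using distrib by simp
  moreover have "sup d (inf x z) \<le> a" using assms(2,3) by simp
  ultimately show False using \<open>\<not> z \<le> a\<close> by (metis le_supE)
qed

locale interior_operator =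
  fixes \<eta> :: "'a::complete_lattice \<Rightarrow> 'a"
  assumes deflationary: "\<eta> x \<le> x"
    and mono: "y \<le> x \<Longrightarrow> \<eta> y \<le> \<eta> x"
    and idem: "\<eta> (\<eta> x) = \<eta> x"
    and top: "\<eta> top = top"
    and Sup_const: "X \<noteq> {} \<Longrightarrow> \<forall>x\<in>X. \<eta> x = u \<Longrightarrow> \<eta> (Sup X) = u"
begin

lemma le_iff_le_interior: "\<eta> u \<le> v \<longleftrightarrow> \<eta> u \<le> \<eta> v"
proof
  assume "\<eta> u \<le> v"
  then have "\<eta> (\<eta> u) \<le> \<eta> v" by (rule mono)
  then show "\<eta> u \<le> \<eta> v" by (simp only: idem)
next
  assume "\<eta> u \<le> \<eta> v"
  then show "\<eta> u \<le> v" using deflationary[of v] by (rule order.trans)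
qed

lemma eq_if_between: "\<eta> a \<le> y \<Longrightarrow> y \<le> a \<Longrightarrow> \<eta> y = \<eta> a"
  using le_iff_le_interior[of a y] mono[of y a] by simp

lemma coatom_interior_neq_top: "coatom a \<Longrightarrow> \<eta> a \<noteq> top"
  unfolding coatom_def using deflationary[of a] by (auto simp: top_le)

lemma interior_tau: "\<eta> (tau \<eta> y) = \<eta> y"
  unfolding tau_def by (rule Sup_const) auto

lemma tau_eq_coatom:
  assumes "coatom a" and "\<eta> a = \<eta> y"
  shows "tau \<eta> y = a"
proof -
  have "a \<le> tau \<eta> y" unfolding tau_def using assms(2) by (simp add: Sup_upper)
  moreover have "tau \<eta> y \<noteq> top"
  proof
    assume "tau \<eta> y = top"
    then have "\<eta> a = top" using interior_tau[of y] assms(2) top by simp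
    then show False using coatom_interior_neq_top[OF assms(1)] by contradiction
  qed
  ultimately show ?thesis using \<open>coatom a\<close> unfolding coatom_def by blast
qed

lemma coatom_interior_inj:
  assumes "coatom x" and "coatom a" and "\<eta> x = \<eta> a"
  shows "x = a"
proof (rule ccontr)
  assume "x \<noteq> a"
  then have "\<not> x \<le> a" using assms(1,2) unfolding coatom_def by auto
  then have "sup x a = top" using \<open>coatom a\<close> coatom_sup_eq_top by blast
  moreover have "\<eta> (Sup {x, a}) = \<eta> a" using assms(3) by (intro Sup_const) auto
  ultimately show False using top coatom_interior_neq_top[OF \<open>coatom a\<close>] by simp
qed

end

lemma interior_operator_if_equa_interior:
  "equa_interior \<eta> TYPE('b) \<Longrightarrow> interior_operator \<eta>"
  unfolding equa_interior_def interior_operator_def by (elim conjE) (intro allI impI conjI; simp)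

lemma equa_interior_sup_inf_distrib:
  "equa_interior \<eta> TYPE('b) \<Longrightarrow> sup (\<eta> u) (inf y z) = inf (sup (\<eta> u) y) (sup (\<eta> u) z)"
  unfolding equa_interior_def by (elim conjE) simp

theorem lemma7p4:
  fixes \<eta> :: "'a::complete_lattice \<Rightarrow> 'a" and x z a :: 'a
  assumes "algebraic_lattice TYPE('a)"
    and "equa_interior \<eta> TYPE('b)"
    and "coatom x" and "coatom z" and "coatom a"
    and "inf x z \<le> a" and "\<not> x \<le> a" and "\<not> z \<le> a"
  shows "\<eta> a \<le> inf x z \<and> tau \<eta> (inf x z) = a \<and> \<not> \<eta> x \<le> a \<and> \<not> \<eta> x \<le> z"
proof -
  interpret interior_operator \<eta>
    using assms(2) by (rule interior_operator_if_equa_interior)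
  have distrib: "\<And>y w. sup (\<eta> a) (inf y w) = inf (sup (\<eta> a) y) (sup (\<eta> a) w)"
    using assms(2) by (rule equa_interior_sup_inf_distrib)
  have "\<eta> a \<le> x"
    using distrib_element_le_coatom[OF distrib deflationary] assms(3,6,8) by blast
  moreover have "\<eta> a \<le> z"
    using distrib_element_le_coatom[OF distrib deflationary _ assms(4,7)] assms(6)
    by (simp add: inf_commute)
  ultimately have below: "\<eta> a \<le> inf x z" by simp
  then have "tau \<eta> (inf x z) = a"
    using tau_eq_coatom[OF assms(5)] eq_if_between[OF _ assms(6)] by simp
  moreover have not_below_a: "\<not> \<eta> x \<le> a"
  proof
    assume "\<eta> x \<le> a"
    with \<open>\<eta> a \<le> x\<close> have "\<eta> x = \<eta> a" using le_iff_le_interior by (blast intro: order.antisym)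
    then show False using coatom_interior_inj assms(3,5,7) by blast
  qed
  moreover have "\<not> \<eta> x \<le> z"
    using not_below_a deflationary[of x] assms(6) by (meson le_inf_iff order.trans)
  ultimately show ?thesis using below by blast
qed

end
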